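(* Let $X$ be a $T_1$ topological space. Then $T''(X)$ is a (Von Neumann) regular ring if and only if for each $Z\in Z''[X]$ there exists a dense cozero set $U$ in $X$ such that $Z\cap U$ is clopen in the subspace $U$.
   Context: $C(X)$ is the ring of real-valued continuous functions on $X$; a cozero set is a set $\{x: h(x)\neq 0\}$ with $h\in C(X)$. $T''(X)$ is the ring (under pointwise operations) of all functions $f\colon X\to\mathbb{R}$ for which there is a dense cozero set $U$ of $X$ with $f|_U$ continuous. For $f\colon X\to \mathbb{R}$, $Z(f)=\{x: f(x)=0\}$, and $Z''[X]=\{Z(f): f\in T''(X)\}$. A commutative ring $R$ is regular if for each $a\in R$ there is $x\in R$ with $a=a^2x$. *)

theory Defs
  imports "HOL-Analysis.Analysis"
begin

definition cozero_set :: "'a topology \<Rightarrow> 'a set \<Rightarrow> bool" where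
  "cozero_set X U \<longleftrightarrow>
     (\<exists>h. continuous_map X euclideanreal h \<and> U = {x \<in> topspace X. h x \<noteq> 0})"

definition dense_in :: "'a topology \<Rightarrow> 'a set \<Rightarrow> bool" where
  "dense_in X U \<longleftrightarrow> U \<subseteq> topspace X \<and> X closure_of U = topspace X"

text \<open>Functions are
  represented as 'a \<Rightarrow> real, normalised to 0 outside topspace X, so that the
  pointwise ring operations and equality are those of functions on X.\<close>
definition Tpp :: "'a topology \<Rightarrow> ('a \<Rightarrow> real) set" where
  "Tpp X = {f. (\<forall>x. x \<notin> topspace X \<longrightarrow> f x = 0) \<and>
               (\<exists>U. cozero_set X U \<and> dense_in X U \<and>
                    continuous_map (subtopology X U) euclideanreal f)}"

definition zero_set :: "'a topology \<Rightarrow> ('a \<Rightarrow> real) \<Rightarrow> 'a set" where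
  "zero_set X f = {x \<in> topspace X. f x = 0}"

definition Zpp :: "'a topology \<Rightarrow> 'a set set" where
  "Zpp X = zero_set X ` Tpp X"

definition regular_fun_ring :: "('a \<Rightarrow> real) set \<Rightarrow> bool" where
  "regular_fun_ring R \<longleftrightarrow> (\<forall>a\<in>R. \<exists>y\<in>R. a = (\<lambda>p. (a p)\<^sup>2 * y p))"

end

theory Submission
  imports Defs
begin

text \<open>If f = f^2 g pointwise, then f g is the indicator function of the cozero set
  of f, so the zero set of f is open wherever f g is continuous. Conversely the
  pseudo-inverse of f (1/f off its zero set, 0 on it) is a quasi-inverse, and it is continuous
  wherever f is continuous and its zero set is open. Finitely many dense cozero sets intersect
  in a dense cozero set, so all functions involved can be made continuous on a common one.\<close>

lemma openin_cozero_set: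
  assumes "cozero_set X U"
  shows "openin X U"
proof -
  obtain h where h: "continuous_map X euclideanreal h" and U: "U = {x \<in> topspace X. h x \<in> -{0}}"
    using assms unfolding cozero_set_def by auto
  show ?thesis
    unfolding U by (rule openin_continuous_map_preimage[OF h]) (simp add: open_Compl)
qed

lemma cozero_set_Int:
  assumes "cozero_set X U" "cozero_set X V"
  shows "cozero_set X (U \<inter> V)"
proof -
  obtain h where h: "continuous_map X euclideanreal h" and U: "U = {x \<in> topspace X. h x \<noteq> 0}"
    using assms(1) unfolding cozero_set_def by auto
  obtain k where k: "continuous_map X euclideanreal k" and V: "V = {x \<in> topspace X. k x \<noteq> 0}"
    using assms(2) unfolding cozero_set_def by auto
  have "U \<inter> V = {x \<in> topspace X. h x * k x \<noteq> 0}"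
    by (auto simp: U V)
  then show ?thesis
    unfolding cozero_set_def using continuous_map_real_mult[OF h k] by blast
qed

lemma dense_in_Int_openin:
  assumes "openin X U" "dense_in X U" "dense_in X V"
  shows "dense_in X (U \<inter> V)"
proof -
  have "X closure_of (U \<inter> V) = X closure_of U"
    using assms openin_subset by (intro closure_of_openin_Int_superset) (auto simp: dense_in_def)
  then show ?thesis
    using assms(2) by (auto simp: dense_in_def)
qed

lemma Tpp_continuous_on_dense_cozero_subset:
  assumes "f \<in> Tpp X" "cozero_set X U" "dense_in X U"
  obtains V where "cozero_set X V" "dense_in X V" "V \<subseteq> U"
    "continuous_map (subtopology X V) euclideanreal f"
proof -
  obtain W where W: "cozero_set X W" "dense_in X W" "continuous_map (subtopology X W) euclideanreal f"
    using assms(1) unfolding Tpp_def by blast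
  show ?thesis
  proof (rule that)
    show "cozero_set X (U \<inter> W)"
      using assms(2) W(1) by (rule cozero_set_Int)
    show "dense_in X (U \<inter> W)"
      using openin_cozero_set[OF assms(2)] assms(3) W(2) by (rule dense_in_Int_openin)
    show "continuous_map (subtopology X (U \<inter> W)) euclideanreal f"
      using W(3) by (rule continuous_map_from_subtopology_mono) simp
  qed simp
qed

lemma openin_zero_set_of_quasi_inverse:
  assumes "continuous_map Y euclideanreal f" "continuous_map Y euclideanreal g"
    and "\<And>x. x \<in> topspace Y \<Longrightarrow> f x = (f x)\<^sup>2 * g x"
  shows "openin Y {x \<in> topspace Y. f x = 0}"
proof -
  have "f x * g x = 1" if "x \<in> topspace Y" "f x \<noteq> 0" for x
    using assms(3)[OF that(1)] that(2) by (simp add: power2_eq_square)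
  then have "{x \<in> topspace Y. f x = 0} = {x \<in> topspace Y. f x * g x \<in> -{1}}"
    by auto
  then show ?thesis
    using openin_continuous_map_preimage[OF continuous_map_real_mult[OF assms(1,2)], of "-{1}"]
    by (simp add: open_Compl)
qed

text \<open>Since inverse 0 = 0 in HOL, \<lambda>x. inverse (f x) is the pseudo-inverse of f.\<close>

lemma continuous_map_inverse_openin_zero_set:
  assumes f: "continuous_map Y euclideanreal f" and Z: "openin Y {x \<in> topspace Y. f x = 0}"
  shows "continuous_map Y euclideanreal (\<lambda>x. inverse (f x))"
proof (rule pasting_lemma[where I = UNIV and T = "\<lambda>b. {x \<in> topspace Y. (f x = 0) = b}"
      and f = "\<lambda>b x. if b then 0 else inverse (f x)"])
  fix b :: bool
  have "openin Y {x \<in> topspace Y. f x \<in> -{0}}"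
    using openin_continuous_map_preimage[OF f, of "-{0}"] by (simp add: open_Compl)
  then show "openin Y {x \<in> topspace Y. (f x = 0) = b}"
    using Z by (cases b) auto
  have "continuous_map (subtopology Y {x \<in> topspace Y. f x \<noteq> 0}) euclideanreal (\<lambda>x. inverse (f x))"
    using f by (intro continuous_map_real_inverse continuous_map_from_subtopology) auto
  then show "continuous_map (subtopology Y {x \<in> topspace Y. (f x = 0) = b}) euclideanreal
      (\<lambda>x. if b then 0 else inverse (f x))"
    by (cases b) auto
qed auto

lemma openin_subtopology_Int_mono:
  assumes "openin (subtopology X U) (S \<inter> U)" "V \<subseteq> U"
  shows "openin (subtopology X V) (S \<inter> V)"
proof -
  obtain T where "openin X T" "S \<inter> U = T \<inter> U"
    using assms(1) by (auto simp: openin_subtopology)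
  then have "S \<inter> V = T \<inter> V"
    using assms(2) by blast
  then show ?thesis
    using \<open>openin X T\<close> by (auto simp: openin_subtopology)
qed

lemma zero_set_Int_eq:
  assumes "U \<subseteq> topspace X"
  shows "zero_set X f \<inter> U = {x \<in> topspace (subtopology X U). f x = 0}"
  using assms by (auto simp: zero_set_def)

lemma zero_set_clopen_if_regular_Tpp:
  assumes reg: "regular_fun_ring (Tpp X)" and "Z \<in> Zpp X"
  shows "\<exists>U. cozero_set X U \<and> dense_in X U \<and>
    openin (subtopology X U) (Z \<inter> U) \<and> closedin (subtopology X U) (Z \<inter> U)"
proof -
  obtain f where f: "f \<in> Tpp X" and Z: "Z = zero_set X f"
    using assms(2) unfolding Zpp_def by blast
  obtain g where g: "g \<in> Tpp X" and fg: "f = (\<lambda>x. (f x)\<^sup>2 * g x)"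
    using reg f unfolding regular_fun_ring_def by blast
  obtain U where U: "cozero_set X U" "dense_in X U" "continuous_map (subtopology X U) euclideanreal f"
    using f unfolding Tpp_def by blast
  obtain V where V: "cozero_set X V" "dense_in X V" "V \<subseteq> U"
    and g_cont: "continuous_map (subtopology X V) euclideanreal g"
    using Tpp_continuous_on_dense_cozero_subset[OF g U(1,2)] .
  have f_cont: "continuous_map (subtopology X V) euclideanreal f"
    using U(3) V(3) by (rule continuous_map_from_subtopology_mono)
  have ZV: "Z \<inter> V = {x \<in> topspace (subtopology X V). f x = 0}"
    using V(2) unfolding Z dense_in_def by (intro zero_set_Int_eq) simp
  have "openin (subtopology X V) (Z \<inter> V)"
    unfolding ZV using f_cont g_cont by (rule openin_zero_set_of_quasi_inverse) (metis fg)
  moreover have "closedin (subtopology X V) (Z \<inter> V)"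
    unfolding ZV using closedin_continuous_map_preimage[OF f_cont, of "{0}"] by simp
  ultimately show ?thesis
    using V(1,2) by blast
qed

lemma regular_Tpp_if_zero_sets_open:
  assumes "\<And>Z. Z \<in> Zpp X \<Longrightarrow> \<exists>U. cozero_set X U \<and> dense_in X U \<and> openin (subtopology X U) (Z \<inter> U)"
  shows "regular_fun_ring (Tpp X)"
  unfolding regular_fun_ring_def
proof
  fix f assume f: "f \<in> Tpp X"
  obtain U where U: "cozero_set X U" "dense_in X U" "openin (subtopology X U) (zero_set X f \<inter> U)"
    using assms f unfolding Zpp_def by blast
  obtain V where V: "cozero_set X V" "dense_in X V" "V \<subseteq> U"
    and f_cont: "continuous_map (subtopology X V) euclideanreal f"
    using Tpp_continuous_on_dense_cozero_subset[OF f U(1,2)] .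
  have "openin (subtopology X V) (zero_set X f \<inter> V)"
    using U(3) V(3) by (rule openin_subtopology_Int_mono)
  moreover have "zero_set X f \<inter> V = {x \<in> topspace (subtopology X V). f x = 0}"
    using V(2) unfolding dense_in_def by (intro zero_set_Int_eq) simp
  ultimately have "continuous_map (subtopology X V) euclideanreal (\<lambda>x. inverse (f x))"
    using f_cont by (intro continuous_map_inverse_openin_zero_set) simp_all
  then have "(\<lambda>x. inverse (f x)) \<in> Tpp X"
    using f V(1,2) unfolding Tpp_def by auto
  moreover have "f x = (f x)\<^sup>2 * inverse (f x)" for x
    by (cases "f x = 0") (simp_all add: power2_eq_square)
  ultimately show "\<exists>g\<in>Tpp X. f = (\<lambda>x. (f x)\<^sup>2 * g x)"
    by fast
qed

theorem theorem3p1: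
  fixes X :: "'a topology"
  assumes "t1_space X"
  shows "regular_fun_ring (Tpp X) \<longleftrightarrow>
    (\<forall>Z\<in>Zpp X. \<exists>U. cozero_set X U \<and> dense_in X U \<and>
        openin (subtopology X U) (Z \<inter> U) \<and> closedin (subtopology X U) (Z \<inter> U))"
proof
  assume "regular_fun_ring (Tpp X)"
  then show "\<forall>Z\<in>Zpp X. \<exists>U. cozero_set X U \<and> dense_in X U \<and>
      openin (subtopology X U) (Z \<inter> U) \<and> closedin (subtopology X U) (Z \<inter> U)"
    using zero_set_clopen_if_regular_Tpp by blast
next
  assume "\<forall>Z\<in>Zpp X. \<exists>U. cozero_set X U \<and> dense_in X U \<and>
      openin (subtopology X U) (Z \<inter> U) \<and> closedin (subtopology X U) (Z \<inter> U)"
  then show "regular_fun_ring (Tpp X)"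
    by (intro regular_Tpp_if_zero_sets_open) blast
qed

end
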